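(* Let $r,t\geq 2$ be integers and let $G_r$ be any graph on $r$ vertices. Let $G_{r,t}$ be the graph obtained from $G_r$ by attaching $t$ new pendant vertices to each vertex of $G_r$ (so $G_{r,t}$ has $r(t+1)$ vertices). Then $\rho(G_{r,t})=r$, and for every integer $n\geq t$, $\rho(G_{r,t}\square K_n)=rt$.
   Context: All graphs are finite and simple. A set $P\subseteq V(G)$ is a packing of $G$ if $N[u]\cap N[v]=\emptyset$ for all distinct $u,v\in P$, where $N[u]$ is the closed neighborhood of $u$; the packing number $\rho(G)$ is the maximum cardinality of a packing of $G$. $K_n$ is the complete graph on $n$ vertices. The Cartesian product $G\square H$ has vertex set $V(G)\times V(H)$, with $(g,h)$ adjacent to $(g',h')$ iff ($gg'\in E(G)$ and $h=h'$) or ($g=g'$ and $hh'\in E(H)$). *)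

theory Defs
  imports Main
begin

definition simple_graph :: "'a set \<Rightarrow> ('a \<Rightarrow> 'a \<Rightarrow> bool) \<Rightarrow> bool" where
  "simple_graph V E \<longleftrightarrow> finite V \<and> (\<forall>u v. E u v \<longrightarrow> u \<in> V \<and> v \<in> V)
     \<and> (\<forall>u v. E u v \<longrightarrow> E v u) \<and> (\<forall>u. \<not> E u u)"

definition closed_nbhd :: "'a set \<Rightarrow> ('a \<Rightarrow> 'a \<Rightarrow> bool) \<Rightarrow> 'a \<Rightarrow> 'a set" where
  "closed_nbhd V E u = {v \<in> V. v = u \<or> E u v}"

definition packing :: "'a set \<Rightarrow> ('a \<Rightarrow> 'a \<Rightarrow> bool) \<Rightarrow> 'a set \<Rightarrow> bool" where
  "packing V E P \<longleftrightarrow> P \<subseteq> V \<and>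
     (\<forall>u\<in>P. \<forall>v\<in>P. u \<noteq> v \<longrightarrow> closed_nbhd V E u \<inter> closed_nbhd V E v = {})"

definition packing_number :: "'a set \<Rightarrow> ('a \<Rightarrow> 'a \<Rightarrow> bool) \<Rightarrow> nat" where
  "packing_number V E = Max (card ` {P. packing V E P})"

definition complete_V :: "nat \<Rightarrow> nat set" where
  "complete_V n = {0..<n}"

definition complete_E :: "nat \<Rightarrow> nat \<Rightarrow> nat \<Rightarrow> bool" where
  "complete_E n u v \<longleftrightarrow> u < n \<and> v < n \<and> u \<noteq> v"

definition cart_V :: "'a set \<Rightarrow> 'b set \<Rightarrow> ('a \<times> 'b) set" where
  "cart_V V1 V2 = V1 \<times> V2"

definition cart_E :: "('a \<Rightarrow> 'a \<Rightarrow> bool) \<Rightarrow> ('b \<Rightarrow> 'b \<Rightarrow> bool) \<Rightarrow> 'a \<times> 'b \<Rightarrow> 'a \<times> 'b \<Rightarrow> bool" where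
  "cart_E E1 E2 x y \<longleftrightarrow> (E1 (fst x) (fst y) \<and> snd x = snd y) \<or> (fst x = fst y \<and> E2 (snd x) (snd y))"

text \<open>G_{r,t}: attach t pendant vertices to each vertex of G. Vertex (v, None) is the
  original vertex v; (v, Some i), i < t, are the pendant vertices attached to v.\<close>
definition pendant_V :: "'a set \<Rightarrow> nat \<Rightarrow> ('a \<times> nat option) set" where
  "pendant_V V t = {(v, None) | v. v \<in> V} \<union> {(v, Some i) | v i. v \<in> V \<and> i < t}"

definition pendant_E :: "'a set \<Rightarrow> ('a \<Rightarrow> 'a \<Rightarrow> bool) \<Rightarrow> nat \<Rightarrow> 'a \<times> nat option \<Rightarrow> 'a \<times> nat option \<Rightarrow> bool" where
  "pendant_E V E t x y \<longleftrightarrow> x \<in> pendant_V V t \<and> y \<in> pendant_V V t \<and>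
     ((snd x = None \<and> snd y = None \<and> E (fst x) (fst y))
      \<or> (fst x = fst y \<and> ((snd x = None \<and> snd y \<noteq> None) \<or> (snd x \<noteq> None \<and> snd y = None))))"

end

theory Submission imports Defs begin

text \<open>Lower bounds: one pendant leaf per vertex of G is a packing of G_{r,t}, and the
  i-th leaf of every vertex v, placed in the i-th copy of G_{r,t}, gives a packing of
  G_{r,t} \<box> K_n of size r t. Upper bounds: a packing meets at most once every set of
  vertices with pairwise intersecting closed neighbourhoods. The stars of G_{r,t} are
  r such sets covering G_{r,t}; in G_{r,t} \<box> K_n, the r t sets indexed by (v, i),
  consisting of all copies of the i-th leaf of v and, for i = 0, of v itself, cover
  the product.\<close>

lemma packing_number_eqI:
  assumes "finite V" and "packing V E P\<^sub>0" and "card P\<^sub>0 = m"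
    and "\<And>P. packing V E P \<Longrightarrow> card P \<le> m"
  shows "packing_number V E = m"
  unfolding packing_number_def
proof (rule Max_eqI)
  have "card ` {P. packing V E P} \<subseteq> card ` Pow V"
    unfolding packing_def by auto
  then show "finite (card ` {P. packing V E P})"
    using assms(1) by (meson finite_Pow_iff finite_imageI finite_subset)
  show "m \<in> card ` {P. packing V E P}"
    using assms(2,3) by blast
qed (use assms(4) in auto)

lemma card_packing_le:
  assumes "packing V E P" and "finite S" and "\<And>x. x \<in> V \<Longrightarrow> f x \<in> S"
    and "\<And>x y. x \<in> V \<Longrightarrow> y \<in> V \<Longrightarrow> x \<noteq> y \<Longrightarrow> f x = f y \<Longrightarrow>
           closed_nbhd V E x \<inter> closed_nbhd V E y \<noteq> {}"
  shows "card P \<le> card S"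
proof (rule card_inj_on_le)
  have "P \<subseteq> V" using assms(1) unfolding packing_def by blast
  then show "f ` P \<subseteq> S" using assms(3) by blast
  show "inj_on f P"
    using assms(1,4) \<open>P \<subseteq> V\<close> unfolding inj_on_def packing_def by blast
qed (fact assms(2))

lemma closed_nbhd_cart_sameI:
  assumes "x \<in> V1" and "k \<in> V2" and "l \<in> V2" and "k = l \<or> E2 k l"
  shows "(x, l) \<in> closed_nbhd (cart_V V1 V2) (cart_E E1 E2) (x, k)"
  using assms unfolding closed_nbhd_def cart_V_def cart_E_def by auto

lemma closed_nbhd_cart_edgeI:
  assumes "y \<in> V1" and "k \<in> V2" and "E1 x y"
  shows "(y, k) \<in> closed_nbhd (cart_V V1 V2) (cart_E E1 E2) (x, k)"
  using assms unfolding closed_nbhd_def cart_V_def cart_E_def by auto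

lemma closed_nbhd_cart_subset:
  "closed_nbhd (cart_V V1 V2) (cart_E E1 E2) (x, k)
     \<subseteq> {y. y = x \<or> E1 x y} \<times> {k} \<union> {x} \<times> V2"
  unfolding closed_nbhd_def cart_V_def cart_E_def by auto

lemma pendant_V_None [simp]: "(v, None) \<in> pendant_V V t \<longleftrightarrow> v \<in> V"
  unfolding pendant_V_def by auto

lemma pendant_V_Some [simp]: "(v, Some i) \<in> pendant_V V t \<longleftrightarrow> v \<in> V \<and> i < t"
  unfolding pendant_V_def by auto

lemma mem_pendant_V: "x \<in> pendant_V V t \<longleftrightarrow> fst x \<in> V \<and> (\<forall>i. snd x = Some i \<longrightarrow> i < t)"
  unfolding pendant_V_def by (cases x; cases "snd x") auto

lemma pendant_E_Some [simp]:
  "pendant_E V E t (v, Some i) y \<longleftrightarrow> v \<in> V \<and> i < t \<and> y = (v, None)"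
  unfolding pendant_E_def by (cases y) auto

lemma finite_pendant_V: "finite V \<Longrightarrow> finite (pendant_V V t)"
  by (rule finite_subset[of _ "V \<times> insert None (Some ` {..<t})"])
     (auto simp: pendant_V_def)

lemma closed_nbhd_pendant_leaf:
  "closed_nbhd (pendant_V V t) (pendant_E V E t) (v, Some i) \<subseteq> {(v, Some i), (v, None)}"
  unfolding closed_nbhd_def by auto

lemma centre_in_closed_nbhd_pendant:
  "x \<in> pendant_V V t \<Longrightarrow> (fst x, None) \<in> closed_nbhd (pendant_V V t) (pendant_E V E t) x"
  unfolding closed_nbhd_def by (cases x; cases "snd x") auto

lemma packing_pendant_leaves:
  assumes "0 < t"
  shows "packing (pendant_V V t) (pendant_E V E t) ((\<lambda>v. (v, Some (0::nat))) ` V)"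
    (is "packing _ _ ?P")
  unfolding packing_def
proof (intro conjI ballI impI)
  show "?P \<subseteq> pendant_V V t" using assms by auto
  fix p q assume "p \<in> ?P" "q \<in> ?P" "p \<noteq> q"
  then obtain v w where "p = (v, Some 0)" "q = (w, Some 0)" "v \<noteq> w" by auto
  then show "closed_nbhd (pendant_V V t) (pendant_E V E t) p \<inter>
             closed_nbhd (pendant_V V t) (pendant_E V E t) q = {}"
    using closed_nbhd_pendant_leaf[of V t E v 0] closed_nbhd_pendant_leaf[of V t E w 0]
    by blast
qed

lemma card_packing_pendant_le:
  assumes "finite V" and "packing (pendant_V V t) (pendant_E V E t) P"
  shows "card P \<le> card V"
proof (rule card_packing_le[OF assms(2) assms(1), where f = fst])
  fix x y assume "x \<in> pendant_V V t" "y \<in> pendant_V V t" "fst x = fst y"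
  then show "closed_nbhd (pendant_V V t) (pendant_E V E t) x \<inter>
             closed_nbhd (pendant_V V t) (pendant_E V E t) y \<noteq> {}"
    using centre_in_closed_nbhd_pendant by (metis disjoint_iff)
qed (simp add: mem_pendant_V)

lemma packing_pendant_complete_leaves:
  assumes "t \<le> n"
  shows "packing (cart_V (pendant_V V t) (complete_V n)) (cart_E (pendant_E V E t) (complete_E n))
           ((\<lambda>(v, i). ((v, Some i), i)) ` (V \<times> {..<t}))"
    (is "packing ?V ?E ?P")
  unfolding packing_def
proof (intro conjI ballI impI)
  show "?P \<subseteq> ?V" using assms by (auto simp: cart_V_def complete_V_def)
  fix p q assume "p \<in> ?P" "q \<in> ?P" "p \<noteq> q"
  then obtain v i w j where p: "p = ((v, Some i), i)" and q: "q = ((w, Some j), j)"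
    and "(v, i) \<noteq> (w, j)" by auto
  have leaf: "closed_nbhd ?V ?E ((v, Some i), i) \<subseteq> {(v, Some i)} \<times> UNIV \<union> {((v, None), i)}"
    for v i
    using closed_nbhd_cart_subset[of "pendant_V V t" _ "pendant_E V E t" _ "(v, Some i)" i]
      closed_nbhd_pendant_leaf[of V t E v i]
    unfolding closed_nbhd_def by auto
  show "closed_nbhd ?V ?E p \<inter> closed_nbhd ?V ?E q = {}"
    unfolding p q using leaf[of v i] leaf[of w j] \<open>(v, i) \<noteq> (w, j)\<close> by blast
qed

fun leaf_index :: "nat option \<Rightarrow> nat" where
  "leaf_index None = 0"
| "leaf_index (Some i) = i"

lemma closed_nbhds_pendant_complete_meet:
  assumes "(v, a) \<in> pendant_V V t" and "(v, b) \<in> pendant_V V t" and "k < n" and "l < n"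
    and "leaf_index a = leaf_index b" and "0 < t"
  shows "closed_nbhd (cart_V (pendant_V V t) (complete_V n)) (cart_E (pendant_E V E t) (complete_E n)) ((v, a), k)
       \<inter> closed_nbhd (cart_V (pendant_V V t) (complete_V n)) (cart_E (pendant_E V E t) (complete_E n)) ((v, b), l)
       \<noteq> {}"
    (is "closed_nbhd ?V ?E _ \<inter> closed_nbhd ?V ?E _ \<noteq> {}")
proof -
  have fibre: "((v, c), l') \<in> closed_nbhd ?V ?E ((v, c), k')"
    if "(v, c) \<in> pendant_V V t" "k' < n" "l' < n" for c k' l'
    using that by (intro closed_nbhd_cart_sameI) (auto simp: complete_V_def complete_E_def)
  have edge: "((v, Some 0), k') \<in> closed_nbhd ?V ?E ((v, None), k')" if "k' < n" for k'
    using that assms(1,6)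
    by (intro closed_nbhd_cart_edgeI) (auto simp: complete_V_def pendant_E_def mem_pendant_V)
  consider "a = b" | "a = None" "b = Some 0" | "a = Some 0" "b = None"
    using assms(5) by (cases a; cases b) auto
  then show ?thesis
  proof cases
    case 1
    then have "((v, b), l) \<in> closed_nbhd ?V ?E ((v, a), k) \<inter> closed_nbhd ?V ?E ((v, b), l)"
      using fibre[of a k l] fibre[of b l l] assms(1-4) by simp
    then show ?thesis by blast
  next
    case 2
    then have "((v, Some 0), k) \<in> closed_nbhd ?V ?E ((v, a), k) \<inter> closed_nbhd ?V ?E ((v, b), l)"
      using edge[of k] fibre[of b l k] assms(2-4) by simp
    then show ?thesis by blast
  next
    case 3
    then have "((v, Some 0), l) \<in> closed_nbhd ?V ?E ((v, a), k) \<inter> closed_nbhd ?V ?E ((v, b), l)"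
      using edge[of l] fibre[of a k l] assms(1,3,4) by simp
    then show ?thesis by blast
  qed
qed

lemma card_packing_pendant_complete_le:
  assumes "finite V" and "0 < t"
    and "packing (cart_V (pendant_V V t) (complete_V n)) (cart_E (pendant_E V E t) (complete_E n)) P"
  shows "card P \<le> card V * t"
proof -
  let ?V = "cart_V (pendant_V V t) (complete_V n)"
  have "card P \<le> card (V \<times> {..<t})"
  proof (rule card_packing_le[OF assms(3), where f = "\<lambda>((v, a), k). (v, leaf_index a)"])
    show "finite (V \<times> {..<t})" using assms(1) by simp
    show "(\<lambda>((v, a), k). (v, leaf_index a)) x \<in> V \<times> {..<t}" if "x \<in> ?V" for x
      using that assms(2) by (cases "snd (fst x)") (auto simp: cart_V_def mem_pendant_V)
    fix x y assume "x \<in> ?V" "y \<in> ?V"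
      and "(\<lambda>((v, a), k). (v, leaf_index a)) x = (\<lambda>((v, a), k). (v, leaf_index a)) y"
    moreover obtain v a k w b l where "x = ((v, a), k)" "y = ((w, b), l)"
      by (metis prod.collapse)
    ultimately show "closed_nbhd ?V (cart_E (pendant_E V E t) (complete_E n)) x
             \<inter> closed_nbhd ?V (cart_E (pendant_E V E t) (complete_E n)) y \<noteq> {}"
      using closed_nbhds_pendant_complete_meet[of v a V t b k n l E] assms(2)
      by (auto simp: cart_V_def complete_V_def)
  qed
  then show ?thesis by (simp add: card_cartesian_product)
qed

theorem mainTheorem2:
  fixes V :: "'a set" and E :: "'a \<Rightarrow> 'a \<Rightarrow> bool" and r t :: nat
  assumes "simple_graph V E" and "card V = r" and "r \<ge> 2" and "t \<ge> 2"
  shows "packing_number (pendant_V V t) (pendant_E V E t) = r \<and>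
    (\<forall>n::nat. n \<ge> t \<longrightarrow>
       packing_number (cart_V (pendant_V V t) (complete_V n))
                      (cart_E (pendant_E V E t) (complete_E n)) = r * t)"
proof (intro conjI allI impI)
  have "finite V" and "0 < t"
    using assms(1,4) unfolding simple_graph_def by auto
  have fin: "finite (pendant_V V t)" using \<open>finite V\<close> by (rule finite_pendant_V)
  show "packing_number (pendant_V V t) (pendant_E V E t) = r"
    using fin packing_pendant_leaves[OF \<open>0 < t\<close>] card_packing_pendant_le[OF \<open>finite V\<close>]
    by (intro packing_number_eqI) (auto simp: assms(2) card_image inj_on_def)
  fix n :: nat assume "t \<le> n"
  show "packing_number (cart_V (pendant_V V t) (complete_V n))
          (cart_E (pendant_E V E t) (complete_E n)) = r * t"
    using fin packing_pendant_complete_leaves[OF \<open>t \<le> n\<close>]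
      card_packing_pendant_complete_le[OF \<open>finite V\<close> \<open>0 < t\<close>]
    by (intro packing_number_eqI)
       (auto simp: assms(2) cart_V_def complete_V_def card_image inj_on_def card_cartesian_product)
qed

end
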